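(* Let $f:\mathbb{R}^{n_x}\times U\to\mathbb{R}^{n_x}$ be a vector field with control set $U\subset\mathbb{R}^{n_u}$, let $\mathcal{D}=\{(x^i,u^i,v^i)\}_{i=1}^N$ be a dataset with $u^i\in U$ and $v^i=f(x^i,u^i)$, and let $\mathcal{E}:\mathbb{R}^{n_x}\times\mathbb{R}^{n_x}\to 2^{\mathbb{R}^{n_x}}$ be a set-valued map with closed values which is a valid uncertainty set map, i.e. $f(x,u^i)-v^i\in\mathcal{E}(x;x^i)$ for all $i\in\{1,\dots,N\}$ and all $x\in\mathbb{R}^{n_x}$. Define the Hamiltonian $H(x,p)=\max_{u\in U}p^\top f(x,u)$ and the data-driven Hamiltonian $$\widehat{H}(x,p)=\max_{i\in\{1,\dots,N\}}\ \min_{\widehat{v}^i\in v^i\oplus\mathcal{E}(x;x^i)} p^\top\widehat{v}^i .$$ Then $\widehat{H}(x,p)\le H(x,p)$ for all $x,p\in\mathbb{R}^{n_x}$.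
   Context: $\oplus$ denotes the Minkowski sum, so $v^i\oplus\mathcal{E}(x;x^i)=\{v^i+e: e\in\mathcal{E}(x;x^i)\}$. The vector field $f$ is unknown; only the dataset and the uncertainty set map are available. *)

theory Defs
  imports "HOL-Analysis.Analysis"
begin

text \<open>Hamiltonian H(x,p) = max over u in U of p^T f(x,u). Rendered as a supremum in the
extended reals, which agrees with the maximum whenever it exists.\<close>
definition hamiltonian ::
  "(real^'nx \<Rightarrow> real^'nu \<Rightarrow> real^'nx) \<Rightarrow> (real^'nu) set \<Rightarrow> real^'nx \<Rightarrow> real^'nx \<Rightarrow> ereal" where
  "hamiltonian f U x p = (SUP u\<in>U. ereal (p \<bullet> f x u))"

definition msum :: "'a::plus \<Rightarrow> 'a set \<Rightarrow> 'a set" where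
  "msum v E = {v + e | e. e \<in> E}"

definition dd_hamiltonian ::
  "nat \<Rightarrow> (nat \<Rightarrow> real^'nx) \<Rightarrow> (nat \<Rightarrow> real^'nx) \<Rightarrow> (real^'nx \<Rightarrow> real^'nx \<Rightarrow> (real^'nx) set)
    \<Rightarrow> real^'nx \<Rightarrow> real^'nx \<Rightarrow> ereal" where
  "dd_hamiltonian N xs vs E x p =
     (SUP i\<in>{1..N}. INF vh\<in>msum (vs i) (E x (xs i)). ereal (p \<bullet> vh))"

end

theory Submission
  imports Defs
begin

(* Validity puts the true velocity f(x, u^i) into v^i + E(x; x^i), so each inner minimum is at
   most p \<bullet> f(x, u^i), which is at most H(x, p) because u^i \<in> U. *)

lemma msum_memI: "w - v \<in> E \<Longrightarrow> w \<in> msum v E"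
  for v w :: "'a::ab_group_add"
  unfolding msum_def by (intro CollectI exI[of _ "w - v"]) simp

theorem proposition1:
  fixes f :: "real^'nx \<Rightarrow> real^'nu \<Rightarrow> real^'nx"
    and U :: "(real^'nu) set"
    and N :: nat
    and xs vs :: "nat \<Rightarrow> real^'nx"
    and us :: "nat \<Rightarrow> real^'nu"
    and E :: "real^'nx \<Rightarrow> real^'nx \<Rightarrow> (real^'nx) set"
  assumes us_in: "\<And>i. i \<in> {1..N} \<Longrightarrow> us i \<in> U"
    and data: "\<And>i. i \<in> {1..N} \<Longrightarrow> vs i = f (xs i) (us i)"
    and closed_vals: "\<And>x y. closed (E x y)"
    and valid: "\<And>i x. i \<in> {1..N} \<Longrightarrow> f x (us i) - vs i \<in> E x (xs i)"
  shows "\<forall>x p. dd_hamiltonian N xs vs E x p \<le> hamiltonian f U x p"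
proof (intro allI)
  fix x p
  show "dd_hamiltonian N xs vs E x p \<le> hamiltonian f U x p"
    unfolding dd_hamiltonian_def hamiltonian_def
  proof (rule SUP_least)
    fix i assume i: "i \<in> {1..N}"
    have "(INF vh\<in>msum (vs i) (E x (xs i)). ereal (p \<bullet> vh)) \<le> ereal (p \<bullet> f x (us i))"
      by (rule INF_lower[OF msum_memI[OF valid[OF i]]])
    also have "\<dots> \<le> (SUP u\<in>U. ereal (p \<bullet> f x u))"
      by (rule SUP_upper[OF us_in[OF i]])
    finally show "(INF vh\<in>msum (vs i) (E x (xs i)). ereal (p \<bullet> vh)) \<le> (SUP u\<in>U. ereal (p \<bullet> f x u))" .
  qed
qed

end
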